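(* Let $n\ge1$, $0\le c_0<c_1<\dots<c_n$, $v_0\ge v_1\ge\dots\ge v_n>0$, $0\le\rho_k<\frac{v_k}{2}$ ($k=0,\dots,n$), and let $B=(b_{jk})_{j,k=0}^n$ with $b_{jk}=v_k-c_k$ if $j>k$, $b_{kk}=\frac{v_k}{2}-c_k-\rho_k$, $b_{jk}=-c_j$ if $j<k$. For $k=0,\dots,n$ let $B^{(k)}$ be the matrix obtained from $B$ by replacing column $k$ with the all-ones vector $\mathbf{1}_{n+1}$. Then $$\det B^{(n)}=\prod_{j=0}^{n-1}\Big(-\frac{v_j}{2}-\rho_j\Big),$$ and for $k=0,\dots,n-1$, $$\det B^{(k)}=\det(\tilde B_{n-k}+c_kJ_{n-k})\prod_{j=0}^{k-1}\Big(-\frac{v_j}{2}-\rho_j\Big),$$ where $\tilde B_{n-k}$ is the $(n-k)\times(n-k)$ principal submatrix of $B$ situated in the bottom right-hand corner (rows and columns $k+1,\dots,n$) and $J_{n-k}$ is the $(n-k)\times(n-k)$ all-ones matrix.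
   Context: Rows and columns of $B$ are indexed $0,\dots,n$. An empty product equals $1$. *)

theory Defs
  imports "Jordan_Normal_Form.Determinant"
begin

definition Bmat :: "nat \<Rightarrow> (nat \<Rightarrow> real) \<Rightarrow> (nat \<Rightarrow> real) \<Rightarrow> (nat \<Rightarrow> real) \<Rightarrow> real mat" where
  "Bmat n c v \<rho> = mat (n+1) (n+1) (\<lambda>(j,k).
     if j > k then v k - c k
     else if j = k then v k / 2 - c k - \<rho> k
     else - c j)"

definition replace_col_ones :: "real mat \<Rightarrow> nat \<Rightarrow> real mat" where
  "replace_col_ones M k = mat (dim_row M) (dim_col M) (\<lambda>(i,j). if j = k then 1 else M $$ (i,j))"

definition bottom_right :: "real mat \<Rightarrow> nat \<Rightarrow> nat \<Rightarrow> real mat" where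
  "bottom_right M n k = mat (n-k) (n-k) (\<lambda>(i,j). M $$ (i+k+1, j+k+1))"

definition ones_mat :: "nat \<Rightarrow> real mat" where
  "ones_mat m = mat m m (\<lambda>_. 1)"

end

(* Column k of B^(k) consists of ones. Subtracting (v_j - c_j) times it from each column j < k
   clears column j below the diagonal and leaves -v_j/2 - rho_j on it; subtracting row k from
   every row below it then clears column k under its diagonal 1 and, because b_kj = -c_k for
   j > k, turns the bottom-right block into B~_(n-k) + c_k J. Both operations are
   multiplications by unit lower triangular matrices, and the resulting matrix is block upper
   triangular. The identity is purely algebraic. *)

theory Submission
  imports Defs
begin

lemma det_unit_lower_triangular:
  fixes A :: "'a :: comm_ring_1 mat"
  assumes A: "A \<in> carrier_mat n n"
    and upper_zero: "\<And>i j. i < j \<Longrightarrow> j < n \<Longrightarrow> A $$ (i,j) = 0"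
    and diag_one: "\<And>i. i < n \<Longrightarrow> A $$ (i,i) = 1"
  shows "det A = 1"
proof -
  have "det A = prod_list (diag_mat A)"
    by (rule det_lower_triangular[OF upper_zero A])
  also have "diag_mat A = replicate n 1"
    using A diag_one by (intro nth_equalityI) (auto simp: diag_mat_def)
  finally show ?thesis by simp
qed

lemma det_block_upper_triangular_prefix:
  fixes A :: "'a :: idom mat"
  assumes A: "A \<in> carrier_mat (p + q) (p + q)"
    and lower_zero: "\<And>i j. j < p \<Longrightarrow> j < i \<Longrightarrow> i < p + q \<Longrightarrow> A $$ (i,j) = 0"
  shows "det A = (\<Prod>j<p. A $$ (j,j)) * det (mat q q (\<lambda>(i,j). A $$ (i + p, j + p)))"
proof -
  obtain A1 A2 A3 A4 where split: "split_block A p p = (A1, A2, A3, A4)"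
    by (cases "split_block A p p") auto
  note blocks = split_block[OF split, of q q]
  have A1: "A1 = mat p p (\<lambda>ij. A $$ ij)" and A3: "A3 = mat q p (\<lambda>(i,j). A $$ (i + p, j))"
    and A4: "A4 = mat q q (\<lambda>(i,j). A $$ (i + p, j + p))"
    using split A unfolding split_block_def Let_def by auto
  have "A3 = 0\<^sub>m q p"
    unfolding A3 using A by (intro eq_matI) (auto intro: lower_zero)
  then have "det A = det A1 * det A4"
    using blocks A by (auto intro: det_four_block_mat_lower_left_zero)
  moreover have "det A1 = prod_list (diag_mat A1)"
    using blocks(1) A by (intro det_upper_triangular) (auto simp: upper_triangular_def A1 lower_zero)
  moreover have "prod_list (diag_mat A1) = (\<Prod>j<p. A $$ (j,j))"
    by (simp add: diag_mat_def A1 prod.distinct_set_conv_list[symmetric] atLeast0LessThan)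
  ultimately show ?thesis by (simp add: A4)
qed

definition col_elim_mat :: "nat \<Rightarrow> nat \<Rightarrow> (nat \<Rightarrow> 'a :: comm_ring_1) \<Rightarrow> 'a mat" where
  "col_elim_mat m k a = mat m m (\<lambda>(t,j). if t = j then 1 else if t = k \<and> j < k then - a j else 0)"

definition row_elim_mat :: "nat \<Rightarrow> nat \<Rightarrow> (nat \<Rightarrow> 'a :: comm_ring_1) \<Rightarrow> 'a mat" where
  "row_elim_mat m k b = mat m m (\<lambda>(i,t). if i = t then 1 else if t = k \<and> k < i then - b i else 0)"

lemma col_elim_mat_carrier [simp]: "col_elim_mat m k a \<in> carrier_mat m m"
  and dim_col_elim_mat [simp]: "dim_row (col_elim_mat m k a) = m" "dim_col (col_elim_mat m k a) = m"
  by (simp_all add: col_elim_mat_def)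

lemma row_elim_mat_carrier [simp]: "row_elim_mat m k b \<in> carrier_mat m m"
  and dim_row_elim_mat [simp]: "dim_row (row_elim_mat m k b) = m" "dim_col (row_elim_mat m k b) = m"
  by (simp_all add: row_elim_mat_def)

lemma det_col_elim_mat [simp]: "det (col_elim_mat m k a) = 1"
  by (rule det_unit_lower_triangular) (auto simp: col_elim_mat_def)

lemma det_row_elim_mat [simp]: "det (row_elim_mat m k b) = 1"
  by (rule det_unit_lower_triangular) (auto simp: row_elim_mat_def)

lemma index_mult_col_elim_mat:
  fixes X :: "'a :: comm_ring_1 mat"
  assumes "dim_col X = m" "i < dim_row X" "j < m" "k < m"
  shows "(X * col_elim_mat m k a) $$ (i,j) = X $$ (i,j) - (if j < k then a j * X $$ (i,k) else 0)"
proof -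
  have "(X * col_elim_mat m k a) $$ (i,j) = (\<Sum>t<m. X $$ (i,t) * col_elim_mat m k a $$ (t,j))"
    using assms by (auto simp: scalar_prod_def atLeast0LessThan col_elim_mat_def intro!: sum.cong)
  also have "\<dots> = (\<Sum>t<m. (if t = j then X $$ (i,t) else 0)
      - (if t = k \<and> j < k then a j * X $$ (i,t) else 0))"
    using assms by (intro sum.cong) (auto simp: col_elim_mat_def)
  also have "\<dots> = X $$ (i,j) - (if j < k then a j * X $$ (i,k) else 0)"
    using assms by (simp add: sum_subtractf)
  finally show ?thesis .
qed

lemma index_row_elim_mat_mult:
  fixes Y :: "'a :: comm_ring_1 mat"
  assumes "dim_row Y = m" "i < m" "j < dim_col Y" "k < m"
  shows "(row_elim_mat m k b * Y) $$ (i,j) = Y $$ (i,j) - (if k < i then b i * Y $$ (k,j) else 0)"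
proof -
  have "(row_elim_mat m k b * Y) $$ (i,j) = (\<Sum>t<m. row_elim_mat m k b $$ (i,t) * Y $$ (t,j))"
    using assms by (auto simp: scalar_prod_def atLeast0LessThan row_elim_mat_def intro!: sum.cong)
  also have "\<dots> = (\<Sum>t<m. (if t = i then Y $$ (t,j) else 0)
      - (if t = k \<and> k < i then b i * Y $$ (t,j) else 0))"
    using assms by (intro sum.cong) (auto simp: row_elim_mat_def)
  also have "\<dots> = Y $$ (i,j) - (if k < i then b i * Y $$ (k,j) else 0)"
    using assms by (simp add: sum_subtractf)
  finally show ?thesis .
qed

lemma det_replace_col_ones_Bmat:
  fixes c v \<rho> :: "nat \<Rightarrow> real"
  assumes "k \<le> n"
  shows "det (replace_col_ones (Bmat n c v \<rho>) k) =
    det (bottom_right (Bmat n c v \<rho>) n k + c k \<cdot>\<^sub>m ones_mat (n - k)) * (\<Prod>j<k. - v j / 2 - \<rho> j)"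
proof -
  define X where "X = replace_col_ones (Bmat n c v \<rho>) k"
  define Y where "Y = X * col_elim_mat (Suc n) k (\<lambda>j. v j - c j)"
  define M where "M = row_elim_mat (Suc n) k (\<lambda>_. 1) * Y"
  have X: "X \<in> carrier_mat (Suc n) (Suc n)"
    by (simp add: X_def replace_col_ones_def Bmat_def)
  then have Y: "Y \<in> carrier_mat (Suc n) (Suc n)"
    by (simp add: Y_def)
  then have M: "M \<in> carrier_mat (Suc n) (Suc n)"
    unfolding M_def by (rule mult_carrier_mat[OF row_elim_mat_carrier])
  have X_entry: "X $$ (i,j) = (if j = k then 1 else if j < i then v j - c j
      else if i = j then v j / 2 - c j - \<rho> j else - c i)" if "i < Suc n" "j < Suc n" for i j
    using that by (simp add: X_def replace_col_ones_def Bmat_def)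
  have Y_entry: "Y $$ (i,j) = X $$ (i,j) - (if j < k then (v j - c j) * X $$ (i,k) else 0)"
    if "i < Suc n" "j < Suc n" for i j
    unfolding Y_def using that assms X by (intro index_mult_col_elim_mat) auto
  have M_entry: "M $$ (i,j) = Y $$ (i,j) - (if k < i then Y $$ (k,j) else 0)"
    if "i < Suc n" "j < Suc n" for i j
    unfolding M_def using that assms Y by (subst index_row_elim_mat_mult) auto
  have "det M = det X"
    using X by (simp add: M_def Y_def det_mult[of _ "Suc n"])
  also have "det M = (\<Prod>j<Suc k. M $$ (j,j))
      * det (mat (n - k) (n - k) (\<lambda>(i,j). M $$ (i + Suc k, j + Suc k)))"
  proof (rule det_block_upper_triangular_prefix)
    show "M \<in> carrier_mat (Suc k + (n - k)) (Suc k + (n - k))"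
      using assms M by simp
  qed (use assms in \<open>auto simp: M_entry Y_entry X_entry\<close>)
  also have "(\<Prod>j<Suc k. M $$ (j,j)) = (\<Prod>j<k. - v j / 2 - \<rho> j)"
    using assms by (auto simp: M_entry Y_entry X_entry intro!: prod.cong)
  also have "mat (n - k) (n - k) (\<lambda>(i,j). M $$ (i + Suc k, j + Suc k))
      = bottom_right (Bmat n c v \<rho>) n k + c k \<cdot>\<^sub>m ones_mat (n - k)"
    by (rule eq_matI) (auto simp: M_entry Y_entry X_entry bottom_right_def ones_mat_def Bmat_def)
  finally show ?thesis by (simp add: X_def mult.commute)
qed

theorem lemma5p3:
  fixes n :: nat and c v \<rho> :: "nat \<Rightarrow> real"
  assumes "n \<ge> 1"
    and "0 \<le> c 0"
    and "\<And>k. k < n \<Longrightarrow> c k < c (Suc k)"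
    and "\<And>k. k < n \<Longrightarrow> v k \<ge> v (Suc k)"
    and "v n > 0"
    and "\<And>k. k \<le> n \<Longrightarrow> 0 \<le> \<rho> k \<and> \<rho> k < v k / 2"
  shows "det (replace_col_ones (Bmat n c v \<rho>) n) = (\<Prod>j<n. - v j / 2 - \<rho> j)
    \<and> (\<forall>k<n. det (replace_col_ones (Bmat n c v \<rho>) k) =
           det (bottom_right (Bmat n c v \<rho>) n k + c k \<cdot>\<^sub>m ones_mat (n-k)) * (\<Prod>j<k. - v j / 2 - \<rho> j))"
proof
  have "det (bottom_right (Bmat n c v \<rho>) n n + c n \<cdot>\<^sub>m ones_mat 0) = 1"
    by (simp add: bottom_right_def ones_mat_def)
  then show "det (replace_col_ones (Bmat n c v \<rho>) n) = (\<Prod>j<n. - v j / 2 - \<rho> j)"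
    using det_replace_col_ones_Bmat[of n n] by simp
qed (simp add: det_replace_col_ones_Bmat)

end
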